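(* Let $X$ be a compact metric space, $T\colon X\to X$ a homeomorphism and $\mu$ an ergodic $T$-invariant Borel probability measure. Let $A,H\colon X\to\mathbb{GL}(2,\mathbb{R})$ be continuous and suppose the cocycles $A_T$ and $H_T$ are quasi-conjugated. Then (i) for every $\theta\in\mathbb{R}$ the cocycles generated by $A_\theta(x)=A(x)R_\theta$ and $H_\theta(x)=H(x)R_\theta$ over $T$ are quasi-conjugated, and (ii) $\lambda^+(A)=\lambda^+(H)$.
   Context: For continuous $B\colon X\to\mathbb{GL}(2,\mathbb{R})$, $B_T(x,v)=(Tx,B(x)v)$ on $X\times\mathbb{R}^2$, $B^n(x)=B(T^{n-1}x)\cdots B(x)$, and $\lambda^+(B)=\lim_{n\to\infty}\frac1n\log\|B^n(x)\|$ ($\mu$-a.e. constant). $R_\theta$ is the rotation by angle $\theta$. The cocycles $A_T$ and $H_T$ are quasi-conjugated if there exist families $\{B(x)\in\mathbb{SO}(2,\mathbb{R}):x\in X\}$ and $\{D(x)\in\mathbb{SO}(2,\mathbb{R}):x\in X\}$ (no continuity in $x$ required) such that $H(x)=D(x)^{-1}A(x)B(x)$ and $B(Tx)=s(x)D(x)$ with $s(x)\in\{1,-1\}$, for every $x\in X$. *)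

theory Defs
  imports "HOL-Probability.Probability"
begin

definition rot :: "real \<Rightarrow> real^2^2" where
  "rot \<theta> = vector [vector [cos \<theta>, - sin \<theta>], vector [sin \<theta>, cos \<theta>]]"

definition SO2 :: "(real^2^2) set" where
  "SO2 = {U. orthogonal_matrix U \<and> det U = 1}"

fun cocycle :: "('a \<Rightarrow> 'a) \<Rightarrow> ('a \<Rightarrow> real^2^2) \<Rightarrow> nat \<Rightarrow> 'a \<Rightarrow> real^2^2" where
  "cocycle T B 0 x = mat 1"
| "cocycle T B (Suc n) x = B ((T ^^ n) x) ** cocycle T B n x"

definition opnorm :: "real^2^2 \<Rightarrow> real" where
  "opnorm B = onorm (\<lambda>v. B *v v)"

definition lyap :: "'a measure \<Rightarrow> ('a \<Rightarrow> 'a) \<Rightarrow> ('a \<Rightarrow> real^2^2) \<Rightarrow> real" where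
  "lyap M T B = (THE c. AE x in M.
      (\<lambda>n. ln (opnorm (cocycle T B n x)) / real n) \<longlonglongrightarrow> c)"

definition measure_preserving :: "'a measure \<Rightarrow> ('a \<Rightarrow> 'a) \<Rightarrow> bool" where
  "measure_preserving M T \<longleftrightarrow> T \<in> M \<rightarrow>\<^sub>M M \<and> distr M M T = M"

definition ergodic :: "'a measure \<Rightarrow> ('a \<Rightarrow> 'a) \<Rightarrow> bool" where
  "ergodic M T \<longleftrightarrow> (\<forall>S \<in> sets M. T -` S \<inter> space M = S \<longrightarrow>
       measure M S = 0 \<or> measure M S = 1)"

text \<open>Quasi-conjugacy of the cocycles A_T and H_T over T on X
  (no continuity of B, D in x required).\<close>
definition quasi_conj :: "'a set \<Rightarrow> ('a \<Rightarrow> 'a) \<Rightarrow> ('a \<Rightarrow> real^2^2) \<Rightarrow> ('a \<Rightarrow> real^2^2) \<Rightarrow> bool" where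
  "quasi_conj X T A H \<longleftrightarrow> (\<exists>B D s. \<forall>x\<in>X.
      B x \<in> SO2 \<and> D x \<in> SO2 \<and> s x \<in> {1, -1::real} \<and>
      H x = matrix_inv (D x) ** A x ** B x \<and>
      B (T x) = s x *\<^sub>R D x)"

end

theory Submission
  imports Defs
begin

text \<open>Rotations of the plane commute with one another, so the quasi-conjugacy
  \<open>H = D\<^sup>-\<^sup>1 A B\<close> survives right multiplication by \<open>R\<^sub>\<theta>\<close> with the same \<open>B\<close> and \<open>D\<close>.
  Along an orbit the relation \<open>B(Tx) = \<plusminus>D(x)\<close> turns \<open>B(Ty) H(y)\<close> into
  \<open>\<plusminus>A(y) B(y)\<close> at every step, so by induction \<open>B(T\<^sup>nx) H\<^sup>n(x) = \<plusminus>A\<^sup>n(x) B(x)\<close>.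
  Orthogonal factors and signs do not change the operator norm, hence
  \<open>\<parallel>H\<^sup>n(x)\<parallel> = \<parallel>A\<^sup>n(x)\<parallel>\<close> for every \<open>x\<close> and \<open>n\<close>, and the Lyapunov exponents agree.\<close>

lemma invertible_matrix_inv_right:
  fixes A :: "'a::semiring_1^'n^'n"
  assumes "invertible A"
  shows "A ** matrix_inv A = mat 1"
proof -
  have "\<exists>A'. A ** A' = mat 1 \<and> A' ** A = mat 1"
    using assms by (simp add: invertible_def)
  then show ?thesis
    unfolding matrix_inv_def by (rule someI_ex[THEN conjunct1])
qed

lemma orthogonal_matrix_invertible: "orthogonal_matrix U \<Longrightarrow> invertible U"
  unfolding orthogonal_matrix_def invertible_def by blast

lemma orthogonal_matrix_norm_mult:
  fixes U :: "real^'n^'n"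
  assumes "orthogonal_matrix U"
  shows "norm (U *v v) = norm v"
proof -
  have "orthogonal_transformation ((*v) U)"
    using assms by (simp add: orthogonal_transformation_matrix matrix_of_matrix_vector_mul)
  then show ?thesis
    by (rule orthogonal_transformation_norm)
qed

lemma opnorm_orthogonal_mult_left:
  assumes "orthogonal_matrix U"
  shows "opnorm (U ** C) = opnorm C"
  unfolding opnorm_def onorm_def
  by (simp add: matrix_vector_mul_assoc[symmetric] orthogonal_matrix_norm_mult[OF assms])

lemma opnorm_orthogonal_mult_right:
  assumes "orthogonal_matrix V"
  shows "opnorm (C ** V) = opnorm C"
proof -
  let ?q = "\<lambda>y::real^2. norm (C *v y) / norm y"
  have quotient: "(\<lambda>x. norm ((C ** V) *v x) / norm x) = ?q \<circ> (*v) V"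
    by (auto simp: matrix_vector_mul_assoc[symmetric] orthogonal_matrix_norm_mult[OF assms])
  have "V *v (transpose V *v y) = y" for y
    using assms by (simp add: orthogonal_matrix_def matrix_vector_mul_assoc
        del: transpose_matrix_vector)
  then have "range ((*v) V) = UNIV"
    by (metis surj_def)
  then show ?thesis
    unfolding opnorm_def onorm_def quotient image_comp[symmetric] by simp
qed

lemma opnorm_scaleR: "opnorm (c *\<^sub>R C) = \<bar>c\<bar> * opnorm C"
proof -
  have "(\<lambda>v. (c *\<^sub>R C) *v v) = (\<lambda>v. c *\<^sub>R (C *v v))"
    by (simp add: scaleR_matrix_vector_assoc)
  then show ?thesis
    unfolding opnorm_def by (simp add: onorm_scaleR)
qed

lemma SO2_entries:
  assumes "U \<in> SO2"
  shows "U$2$2 = U$1$1" and "U$1$2 = - U$2$1"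
proof -
  have orth: "transpose U ** U = mat 1" and det: "det U = 1"
    using assms by (auto simp: SO2_def orthogonal_matrix_def)
  have "(transpose U ** U)$i$i = 1" for i
    using orth by (simp add: mat_def)
  then have "U$1$1 * U$1$1 + U$2$1 * U$2$1 = 1" "U$1$2 * U$1$2 + U$2$2 * U$2$2 = 1"
    by (simp_all add: matrix_matrix_mult_def transpose_def sum_2)
  moreover have "U$1$1 * U$2$2 - U$1$2 * U$2$1 = 1"
    using det by (simp add: det_2)
  ultimately have "(U$2$2 - U$1$1)\<^sup>2 + (U$1$2 + U$2$1)\<^sup>2 = 0"
    by (simp add: power2_eq_square algebra_simps)
  then show "U$2$2 = U$1$1" and "U$1$2 = - U$2$1"
    by (simp_all add: sum_power2_eq_zero_iff)
qed

lemma SO2_rot_commute: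
  assumes "U \<in> SO2"
  shows "U ** rot \<theta> = rot \<theta> ** U"
  using SO2_entries[OF assms]
  by (simp add: rot_def vec_eq_iff forall_2 matrix_matrix_mult_def sum_2 algebra_simps)

lemma quasi_conj_mult_rot:
  assumes "quasi_conj X T A H"
  shows "quasi_conj X T (\<lambda>x. A x ** rot \<theta>) (\<lambda>x. H x ** rot \<theta>)"
proof -
  obtain B D s where BDs: "\<forall>x\<in>X. B x \<in> SO2 \<and> D x \<in> SO2 \<and> s x \<in> {1, -1::real} \<and>
      H x = matrix_inv (D x) ** A x ** B x \<and> B (T x) = s x *\<^sub>R D x"
    using assms unfolding quasi_conj_def by blast
  have "H x ** rot \<theta> = matrix_inv (D x) ** (A x ** rot \<theta>) ** B x" if "x \<in> X" for x
    using BDs SO2_rot_commute[of "B x" \<theta>] that by (metis matrix_mul_assoc)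
  with BDs show ?thesis
    unfolding quasi_conj_def by blast
qed

lemma cocycle_quasi_conj:
  assumes BDs: "\<And>x. x \<in> X \<Longrightarrow> D x \<in> SO2 \<and> s x \<in> {1, -1::real} \<and>
      H x = matrix_inv (D x) ** A x ** B x \<and> B (T x) = s x *\<^sub>R D x"
    and T_X: "\<And>x. x \<in> X \<Longrightarrow> T x \<in> X"
    and "x \<in> X"
  shows "\<exists>c\<in>{1, -1::real}. B ((T ^^ n) x) ** cocycle T H n x = c *\<^sub>R (cocycle T A n x ** B x)"
proof (induction n)
  case 0
  show ?case by (intro bexI[of _ 1]) auto
next
  case (Suc n)
  then obtain c where c: "c \<in> {1, -1::real}"
    and IH: "B ((T ^^ n) x) ** cocycle T H n x = c *\<^sub>R (cocycle T A n x ** B x)"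
    by blast
  let ?y = "(T ^^ n) x"
  have "?y \<in> X"
    using \<open>x \<in> X\<close> T_X by (induction n) auto
  note y = BDs[OF this]
  have "B ((T ^^ Suc n) x) ** cocycle T H (Suc n) x
      = (s ?y *\<^sub>R D ?y) ** (matrix_inv (D ?y) ** A ?y ** B ?y) ** cocycle T H n x"
    using y by (simp add: matrix_mul_assoc)
  also have "\<dots> = s ?y *\<^sub>R ((D ?y ** matrix_inv (D ?y)) ** A ?y ** (B ?y ** cocycle T H n x))"
    by (simp add: matrix_mul_assoc matrix_scalar_ac scalar_matrix_assoc[symmetric])
  also have "\<dots> = (s ?y * c) *\<^sub>R (cocycle T A (Suc n) x ** B x)"
    using y IH invertible_matrix_inv_right[OF orthogonal_matrix_invertible, of "D ?y"]
    by (simp add: SO2_def matrix_mul_assoc matrix_scalar_ac scalar_matrix_assoc[symmetric])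
  finally show ?case
    using c y by (intro bexI[of _ "s ?y * c"]) auto
qed

lemma opnorm_cocycle_quasi_conj:
  assumes "quasi_conj X T A H" and "\<And>x. x \<in> X \<Longrightarrow> T x \<in> X" and "x \<in> X"
  shows "opnorm (cocycle T H n x) = opnorm (cocycle T A n x)"
proof -
  obtain B D s where BDs: "\<And>x. x \<in> X \<Longrightarrow> B x \<in> SO2 \<and> D x \<in> SO2 \<and> s x \<in> {1, -1::real} \<and>
      H x = matrix_inv (D x) ** A x ** B x \<and> B (T x) = s x *\<^sub>R D x"
    using assms(1) unfolding quasi_conj_def by blast
  then obtain c where c: "c \<in> {1, -1::real}"
    and telescoped: "B ((T ^^ n) x) ** cocycle T H n x = c *\<^sub>R (cocycle T A n x ** B x)"
    using cocycle_quasi_conj[of X D s H A B T] assms(2,3) by blast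
  have "(T ^^ n) x \<in> X"
    using assms(2,3) by (induction n) auto
  then have "orthogonal_matrix (B ((T ^^ n) x))" "orthogonal_matrix (B x)"
    using BDs \<open>x \<in> X\<close> by (auto simp: SO2_def)
  then have "opnorm (cocycle T H n x) = opnorm (c *\<^sub>R (cocycle T A n x ** B x))"
    by (metis telescoped opnorm_orthogonal_mult_left)
  also have "\<dots> = opnorm (cocycle T A n x)"
    using c \<open>orthogonal_matrix (B x)\<close> by (auto simp: opnorm_scaleR opnorm_orthogonal_mult_right)
  finally show ?thesis .
qed

lemma lyap_cong:
  assumes "\<And>x n. x \<in> space M \<Longrightarrow> opnorm (cocycle T A n x) = opnorm (cocycle T H n x)"
  shows "lyap M T A = lyap M T H"
  unfolding lyap_def using assms by simp

theorem lemma2p1: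
  fixes X :: "'a::metric_space set" and T Tinv :: "'a \<Rightarrow> 'a"
    and M :: "'a measure" and A H :: "'a \<Rightarrow> real^2^2"
  assumes "compact X"
    and "homeomorphism X X T Tinv"
    and "space M = X" and "sets M = sets (restrict_space borel X)"
    and "prob_space M"
    and "measure_preserving M T"
    and "ergodic M T"
    and "continuous_on X A" and "\<forall>x\<in>X. invertible (A x)"
    and "continuous_on X H" and "\<forall>x\<in>X. invertible (H x)"
    and "quasi_conj X T A H"
  shows "(\<forall>\<theta>::real. quasi_conj X T (\<lambda>x. A x ** rot \<theta>) (\<lambda>x. H x ** rot \<theta>))
         \<and> lyap M T A = lyap M T H"
proof
  show "\<forall>\<theta>. quasi_conj X T (\<lambda>x. A x ** rot \<theta>) (\<lambda>x. H x ** rot \<theta>)"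
    using assms(12) by (blast intro: quasi_conj_mult_rot)
  have "\<And>x. x \<in> X \<Longrightarrow> T x \<in> X"
    using assms(2) unfolding homeomorphism_def by blast
  then show "lyap M T A = lyap M T H"
    using opnorm_cocycle_quasi_conj[OF assms(12)] assms(3) by (intro lyap_cong) auto
qed

end
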